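(* Let $A=(a_{n,k})$ be as described in the context. If $A$ satisfies the $MHBVS$ condition, then \[ \left|\sum_{k=0}^n a_{n,k}D_k(t)\right|=O\!\left(t^{-1}\,\overline{A}_{n,n-2\tau}\right), \] and if $A$ satisfies the $MRBVS$ condition, then \[ \left|\sum_{k=0}^n a_{n,k}D_k(t)\right|=O\!\left(t^{-1}A_{n,\tau}\right), \] for all $n=2,3,\dots$ and all $\frac{2\pi}{n}\le t\le\pi$, where $\tau=[\pi/t]$ (integer part), with $O$-constants independent of $n$ and $t$.
   Context: $A=(a_{n,k})$ is an infinite lower triangular real matrix with $a_{n,k}\ge0$ for $0\le k\le n$, $a_{n,k}=0$ for $k>n$, and $\sum_{k=0}^n a_{n,k}=1$ for every $n$. For $0\le m\le n$, $A_{n,m}=\sum_{k=0}^m a_{n,k}$ and $\overline A_{n,m}=\sum_{k=m}^n a_{n,k}$. $D_k(t)=\frac12+\sum_{\nu=1}^k\cos\nu t$ is the Dirichlet kernel. "$A$ satisfies the $MRBVS$ condition" means: there is a constant $K$ such that for all $n$ and all $0\le m<n$, $\sum_{k=m}^{n-1}|a_{n,k}-a_{n,k+1}|\le K\frac{1}{m+1}\sum_{m/2\le k\le m}a_{n,k}$. "$A$ satisfies the $MHBVS$ condition" means: there is a constant $K$ such that for all $n$ and all $0\le m<n$, $\sum_{k=0}^{n-m-1}|a_{n,k}-a_{n,k+1}|\le K\frac1{m+1}\sum_{k=n-m}^{n}a_{n,k}$. *)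

theory Defs
  imports Complex_Main
begin

definition admissible_matrix :: "(nat \<Rightarrow> nat \<Rightarrow> real) \<Rightarrow> bool" where
  "admissible_matrix a \<longleftrightarrow>
     (\<forall>n k. k \<le> n \<longrightarrow> 0 \<le> a n k) \<and>
     (\<forall>n k. n < k \<longrightarrow> a n k = 0) \<and>
     (\<forall>n. (\<Sum>k=0..n. a n k) = 1)"

definition Amat :: "(nat \<Rightarrow> nat \<Rightarrow> real) \<Rightarrow> nat \<Rightarrow> nat \<Rightarrow> real" where
  "Amat a n m = (\<Sum>k=0..m. a n k)"

definition Abar :: "(nat \<Rightarrow> nat \<Rightarrow> real) \<Rightarrow> nat \<Rightarrow> nat \<Rightarrow> real" where
  "Abar a n m = (\<Sum>k=m..n. a n k)"

definition dirichlet :: "nat \<Rightarrow> real \<Rightarrow> real" where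
  "dirichlet k t = 1/2 + (\<Sum>\<nu>=1..k. cos (real \<nu> * t))"

definition MRBVS :: "(nat \<Rightarrow> nat \<Rightarrow> real) \<Rightarrow> bool" where
  "MRBVS a \<longleftrightarrow> (\<exists>K. \<forall>n m. m < n \<longrightarrow>
     (\<Sum>k=m..n-1. \<bar>a n k - a n (k+1)\<bar>)
       \<le> K * (1 / real (m+1)) * (\<Sum>k\<in>{k. real m / 2 \<le> real k \<and> k \<le> m}. a n k))"

definition MHBVS :: "(nat \<Rightarrow> nat \<Rightarrow> real) \<Rightarrow> bool" where
  "MHBVS a \<longleftrightarrow> (\<exists>K. \<forall>n m. m < n \<longrightarrow>
     (\<Sum>k=0..n-m-1. \<bar>a n k - a n (k+1)\<bar>)
       \<le> K * (1 / real (m+1)) * (\<Sum>k=n-m..n. a n k))"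

end

theory Submission
  imports Defs
begin

text \<open>
  Let T_k = D_0 + ... + D_{k-1}, so that D_k = T_{k+1} - T_k. On 0 < t \<le> pi the identities
  2 sin(t/2) D_k(t) = sin((k+1/2)t) and 4 sin(t/2)^2 T_k(t) = 1 - cos(kt) give |D_k(t)| \<le> 3/t and
  |T_k(t)| \<le> 18/t^2, so by summation by parts a block sum of a_{n,k} D_k(t) over p \<le> k \<le> q is
  O(t^-2) times (an endpoint coefficient + the variation of a_{n,.} on [p,q]).
  Split the row at an index where a_{n,k} is at most its average over a block of about
  tau ~ pi/t consecutive indices ([n-2tau, n-tau) under MHBVS, [tau/2, tau] under MRBVS). That
  coefficient is O(t) times the tail sum Abar_{n,n-2tau}, resp. the head sum A_{n,tau}, and the
  bounded-variation condition makes the variation O(1/tau) = O(t) times the same sum. The other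
  part of the row is estimated termwise with |D_k| \<le> 3/t.
\<close>

lemma dirichlet_Suc: "dirichlet (Suc k) t = dirichlet k t + cos (real (Suc k) * t)"
  by (simp add: dirichlet_def)

lemma sin_half_mult_dirichlet: "2 * sin (t/2) * dirichlet k t = sin ((real k + 1/2) * t)"
proof (induction k)
  case 0
  then show ?case by (simp add: dirichlet_def)
next
  case (Suc k)
  have "2 * sin (t/2) * cos (real (Suc k) * t)
      = sin (real (Suc k) * t + t/2) - sin (real (Suc k) * t - t/2)"
    by (simp add: sin_add sin_diff)
  also have "\<dots> = sin ((real (Suc k) + 1/2) * t) - sin ((real k + 1/2) * t)"
    by (simp add: algebra_simps)
  finally show ?case using Suc by (simp add: dirichlet_Suc algebra_simps)
qed

definition dirichlet_sum :: "nat \<Rightarrow> real \<Rightarrow> real" where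
  "dirichlet_sum k t = (\<Sum>j<k. dirichlet j t)"

lemma dirichlet_eq_diff_dirichlet_sum: "dirichlet k t = dirichlet_sum (Suc k) t - dirichlet_sum k t"
  by (simp add: dirichlet_sum_def)

lemma sin_half_sq_mult_dirichlet_sum: "4 * sin (t/2)^2 * dirichlet_sum k t = 1 - cos (real k * t)"
proof (induction k)
  case 0
  then show ?case by (simp add: dirichlet_sum_def)
next
  case (Suc k)
  have "2 * sin (t/2) * sin ((real k + 1/2) * t)
      = cos ((real k + 1/2) * t - t/2) - cos ((real k + 1/2) * t + t/2)"
    by (simp add: cos_add cos_diff)
  also have "\<dots> = cos (real k * t) - cos (real (Suc k) * t)"
    by (simp add: algebra_simps)
  finally have "2 * sin (t/2) * (2 * sin (t/2) * dirichlet k t) = cos (real k * t) - cos (real (Suc k) * t)"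
    by (simp add: sin_half_mult_dirichlet)
  with Suc show ?case by (simp add: dirichlet_sum_def algebra_simps power2_eq_square)
qed

lemma sin_ge_third:
  fixes x :: real
  assumes "0 \<le> x" "x \<le> 2"
  shows "x / 3 \<le> sin x"
proof -
  have "\<bar>sin x - (\<Sum>m<3. sin_coeff m * x ^ m)\<bar> \<le> inverse (fact 3) * \<bar>x\<bar> ^ 3"
    by (rule Maclaurin_sin_bound)
  moreover have "(\<Sum>m<3. sin_coeff m * x ^ m) = x"
    by (simp add: numeral_3_eq_3 sin_coeff_def)
  moreover have "inverse (fact 3) * \<bar>x\<bar> ^ 3 = x * x\<^sup>2 / 6"
    using assms by (simp add: fact_numeral power3_eq_cube power2_eq_square)
  moreover have "x * x\<^sup>2 \<le> x * 4"
    using assms power_mono[of x 2 2] by (intro mult_left_mono) auto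
  ultimately show ?thesis by linarith
qed

lemma
  assumes "0 < t" "t \<le> pi"
  shows abs_dirichlet_le: "\<bar>dirichlet k t\<bar> \<le> 3 / t"
    and abs_dirichlet_sum_le: "\<bar>dirichlet_sum k t\<bar> \<le> 18 / t\<^sup>2"
proof -
  let ?s = "sin (t/2)"
  have s: "t/6 \<le> ?s" using sin_ge_third[of "t/2"] assms pi_less_4 by simp
  have "\<bar>2 * ?s * dirichlet k t\<bar> \<le> 1" unfolding sin_half_mult_dirichlet by simp
  then have "2 * ?s * \<bar>dirichlet k t\<bar> \<le> 1" using s assms by (simp add: abs_mult)
  then have "2 * (t/6) * \<bar>dirichlet k t\<bar> \<le> 1"
    by (smt (verit) mult_right_mono abs_ge_zero s)
  then show "\<bar>dirichlet k t\<bar> \<le> 3 / t" using assms by (simp add: field_simps)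
  have "\<bar>4 * ?s\<^sup>2 * dirichlet_sum k t\<bar> \<le> 2"
    unfolding sin_half_sq_mult_dirichlet_sum using abs_cos_le_one[of "real k * t"] by linarith
  then have "4 * ?s\<^sup>2 * \<bar>dirichlet_sum k t\<bar> \<le> 2" by (simp add: abs_mult)
  moreover have "(t/6)\<^sup>2 \<le> ?s\<^sup>2" using s assms by (intro power_mono) auto
  ultimately have "4 * (t/6)\<^sup>2 * \<bar>dirichlet_sum k t\<bar> \<le> 2"
    by (smt (verit) mult_right_mono abs_ge_zero)
  then show "\<bar>dirichlet_sum k t\<bar> \<le> 18 / t\<^sup>2" using assms by (simp add: field_simps power2_eq_square)
qed

lemma sum_by_parts:
  fixes a T :: "nat \<Rightarrow> real"
  assumes "p \<le> q"
  shows "(\<Sum>k=p..q. a k * (T (Suc k) - T k))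
       = a q * T (Suc q) - a p * T p - (\<Sum>k=p..<q. (a (Suc k) - a k) * T (Suc k))"
  using assms by (induction q rule: dec_induct) (simp_all add: algebra_simps)

lemma abs_diff_le_variation:
  fixes a :: "nat \<Rightarrow> real"
  assumes "p \<le> q"
  shows "\<bar>a q - a p\<bar> \<le> (\<Sum>k=p..<q. \<bar>a k - a (Suc k)\<bar>)"
  using assms by (induction q rule: dec_induct) simp_all

lemma abs_sum_by_parts_le:
  fixes a T :: "nat \<Rightarrow> real"
  assumes "p \<le> q" and T: "\<And>k. \<bar>T k\<bar> \<le> M"
  shows "\<bar>\<Sum>k=p..q. a k * (T (Suc k) - T k)\<bar>
       \<le> M * \<bar>a q\<bar> + \<bar>a p\<bar> * \<bar>T p\<bar> + M * (\<Sum>k=p..<q. \<bar>a k - a (Suc k)\<bar>)"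
proof -
  have "\<bar>\<Sum>k=p..<q. (a (Suc k) - a k) * T (Suc k)\<bar> \<le> (\<Sum>k=p..<q. \<bar>a k - a (Suc k)\<bar> * M)"
    by (rule order_trans[OF sum_abs sum_mono])
      (simp add: abs_mult abs_minus_commute mult_left_mono T)
  also have "\<dots> = M * (\<Sum>k=p..<q. \<bar>a k - a (Suc k)\<bar>)"
    by (simp add: sum_distrib_left mult.commute)
  finally have "\<bar>\<Sum>k=p..<q. (a (Suc k) - a k) * T (Suc k)\<bar> \<le> \<dots>" .
  moreover have "\<bar>a q * T (Suc q)\<bar> \<le> M * \<bar>a q\<bar>"
    using mult_left_mono[OF T[of "Suc q"], of "\<bar>a q\<bar>"] by (simp add: abs_mult mult.commute)
  moreover have "\<bar>a p * T p\<bar> = \<bar>a p\<bar> * \<bar>T p\<bar>" by (rule abs_mult)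
  ultimately show ?thesis unfolding sum_by_parts[OF assms(1)] by linarith
qed

lemma abs_dirichlet_block_le:
  fixes w :: "nat \<Rightarrow> real"
  assumes "\<And>k. 0 \<le> w k" "p \<le> q" "0 < t" "t \<le> pi"
  shows "\<bar>\<Sum>k=p..q. w k * dirichlet k t\<bar>
       \<le> 36 / t\<^sup>2 * (min (w p) (w q) + (\<Sum>k=p..<q. \<bar>w k - w (Suc k)\<bar>))"
proof -
  define V where "V = (\<Sum>k=p..<q. \<bar>w k - w (Suc k)\<bar>)"
  have "\<bar>\<Sum>k=p..q. w k * dirichlet k t\<bar>
      \<le> 18 / t\<^sup>2 * \<bar>w q\<bar> + \<bar>w p\<bar> * \<bar>dirichlet_sum p t\<bar> + 18 / t\<^sup>2 * V"
    unfolding dirichlet_eq_diff_dirichlet_sum V_def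
    by (rule abs_sum_by_parts_le[OF assms(2)]) (rule abs_dirichlet_sum_le[OF assms(3,4)])
  also have "\<dots> \<le> 18 / t\<^sup>2 * w q + w p * (18 / t\<^sup>2) + 18 / t\<^sup>2 * V"
    using mult_left_mono[OF abs_dirichlet_sum_le[OF assms(3,4), of p] assms(1)[of p]]
    by (simp add: assms(1))
  also have "\<dots> = 18 / t\<^sup>2 * (w p + w q + V)" by (simp add: add_divide_distrib)
  also have "\<dots> \<le> 18 / t\<^sup>2 * (2 * min (w p) (w q) + 2 * V)"
    using abs_diff_le_variation[OF assms(2), of w] by (intro mult_left_mono) (auto simp: V_def)
  finally show ?thesis by (simp add: V_def algebra_simps)
qed

lemma abs_weighted_dirichlet_le:
  fixes w :: "nat \<Rightarrow> real"
  assumes "\<And>k. 0 \<le> w k" "0 < t" "t \<le> pi"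
  shows "\<bar>\<Sum>k\<in>S. w k * dirichlet k t\<bar> \<le> 3 / t * (\<Sum>k\<in>S. w k)"
proof -
  have "\<bar>w k * dirichlet k t\<bar> \<le> 3 / t * w k" for k
    using mult_left_mono[OF abs_dirichlet_le[OF assms(2,3)] assms(1)]
    by (simp add: abs_mult assms(1) mult.commute)
  then have "\<bar>\<Sum>k\<in>S. w k * dirichlet k t\<bar> \<le> (\<Sum>k\<in>S. 3 / t * w k)"
    by (rule order_trans[OF sum_abs sum_mono])
  then show ?thesis by (simp only: sum_distrib_left)
qed

lemma obtain_small_coefficient:
  fixes w :: "nat \<Rightarrow> real"
  assumes "finite J" "m + 1 \<le> 2 * card J" "1 / real (m + 1) \<le> t" "\<And>k. 0 \<le> w k" "sum w J \<le> S"
  obtains q where "q \<in> J" "w q \<le> 2 * t * S"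
proof -
  have "J \<noteq> {}" using assms(2) by auto
  then obtain q where q: "q \<in> J" and q_min: "\<And>k. k \<in> J \<Longrightarrow> w q \<le> w k"
    using ex_is_arg_min_if_finite[OF assms(1), of w] by (auto simp: is_arg_min_linorder)
  have "real (m + 1) * w q \<le> 2 * real (card J) * w q"
    using assms(2,4) by (intro mult_right_mono) (auto simp flip: of_nat_mult)
  also have "\<dots> \<le> 2 * S"
    using sum_bounded_below[of J "w q" w] q_min assms(5) by simp
  finally have "w q \<le> 2 * S / real (m + 1)" by (simp add: field_simps)
  also have "\<dots> = 2 * S * (1 / real (m + 1))" by simp
  also have "\<dots> \<le> 2 * S * t"
    using assms(3) order_trans[OF sum_nonneg assms(5)] assms(4) by (intro mult_left_mono) auto
  finally show thesis using q that by (simp add: mult_ac)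
qed


lemma floor_pi_div_bounds:
  assumes "2 \<le> n" "2 * pi / real n \<le> t" "t \<le> pi"
  defines "\<tau> \<equiv> nat \<lfloor>pi / t\<rfloor>"
  shows "0 < t" "1 \<le> \<tau>" "2 * \<tau> \<le> n" "1 / real (\<tau> + 1) \<le> t"
proof -
  show t: "0 < t" using assms(1,2) pi_gt_zero divide_pos_pos[of "2 * pi" "real n"] by linarith
  have "1 \<le> pi / t" using t assms(3) by simp
  then have floor: "1 \<le> \<lfloor>pi / t\<rfloor>" by simp
  then show "1 \<le> \<tau>" unfolding \<tau>_def by linarith
  have "pi / t \<le> real n / 2" using t assms(1,2) by (simp add: field_simps)
  then show "2 * \<tau> \<le> n" unfolding \<tau>_def using floor by linarith
  have "pi / t < real \<tau> + 1" unfolding \<tau>_def using floor by linarith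
  then have "1 < (real \<tau> + 1) * t" using t pi_ge_two by (simp add: field_simps)
  then show "1 / real (\<tau> + 1) \<le> t" by (simp add: field_simps)
qed

lemma MHBVS_row_bound:
  fixes w :: "nat \<Rightarrow> real"
  assumes nonneg: "\<And>k. 0 \<le> w k" and "0 \<le> K"
    and var: "(\<Sum>k=0..n-m-1. \<bar>w k - w (k+1)\<bar>) \<le> K * (1 / real (m+1)) * (\<Sum>k=n-m..n. w k)"
    and t: "0 < t" "t \<le> pi" and m: "1 \<le> m" "2 * m \<le> n" "1 / real (m+1) \<le> t"
  shows "\<bar>\<Sum>k=0..n. w k * dirichlet k t\<bar> \<le> (3 + 36 * (2 + K)) / t * (\<Sum>k=n-2*m..n. w k)"
proof -
  define S where "S = (\<Sum>k=n-2*m..n. w k)"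
  have block_le: "sum w A \<le> S" if "A \<subseteq> {n-2*m..n}" for A
    unfolding S_def using that by (intro sum_mono2) (auto simp: nonneg)
  have "sum w {n-2*m..<n-m} \<le> S" by (rule block_le) auto
  moreover have "m + 1 \<le> 2 * card {n-2*m..<n-m}" using m by simp
  ultimately obtain q where "q \<in> {n-2*m..<n-m}" and wq: "w q \<le> 2 * t * S"
    using obtain_small_coefficient m(3) nonneg by blast
  then have q: "n - 2*m \<le> q" "q < n - m" by auto
  have "(\<Sum>k=0..<q. \<bar>w k - w (Suc k)\<bar>) \<le> (\<Sum>k=0..n-m-1. \<bar>w k - w (k+1)\<bar>)"
    unfolding Suc_eq_plus1 using q by (intro sum_mono2) auto
  also have "\<dots> \<le> K * (1 / real (m+1)) * (\<Sum>k=n-m..n. w k)" by (rule var)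
  also have "\<dots> \<le> K * t * S"
    using m t \<open>0 \<le> K\<close> by (intro mult_mono mult_left_mono block_le) (auto simp: sum_nonneg nonneg)
  finally have block: "min (w 0) (w q) + (\<Sum>k=0..<q. \<bar>w k - w (Suc k)\<bar>) \<le> (2 + K) * t * S"
    using wq by (simp add: algebra_simps)
  have "\<bar>\<Sum>k=0..q. w k * dirichlet k t\<bar>
      \<le> 36 / t\<^sup>2 * (min (w 0) (w q) + (\<Sum>k=0..<q. \<bar>w k - w (Suc k)\<bar>))"
    using nonneg t by (intro abs_dirichlet_block_le) auto
  also have "\<dots> \<le> 36 / t\<^sup>2 * ((2 + K) * t * S)" using block by (intro mult_left_mono) auto
  also have "\<dots> = 36 * (2 + K) / t * S" using t by (simp add: power2_eq_square field_simps)
  finally have head: "\<bar>\<Sum>k=0..q. w k * dirichlet k t\<bar> \<le> 36 * (2 + K) / t * S" .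
  have tail: "\<bar>\<Sum>k=Suc q..n. w k * dirichlet k t\<bar> \<le> 3 / t * S"
    using q t by (intro order_trans[OF abs_weighted_dirichlet_le[OF nonneg t]] mult_left_mono block_le) auto
  have split: "{0..n} = {0..q} \<union> {Suc q..n}" using q by auto
  have "(\<Sum>k=0..n. w k * dirichlet k t)
      = (\<Sum>k=0..q. w k * dirichlet k t) + (\<Sum>k=Suc q..n. w k * dirichlet k t)"
    unfolding split by (rule sum.union_disjoint) auto
  then show ?thesis using head tail by (simp add: S_def add_divide_distrib distrib_right)
qed

lemma MRBVS_row_bound:
  fixes w :: "nat \<Rightarrow> real"
  assumes nonneg: "\<And>k. 0 \<le> w k" and "0 \<le> K"
    and var: "\<And>p. p < n \<Longrightarrow> (\<Sum>k=p..n-1. \<bar>w k - w (k+1)\<bar>)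
                \<le> K * (1 / real (p+1)) * (\<Sum>k\<in>{k. real p / 2 \<le> real k \<and> k \<le> p}. w k)"
    and t: "0 < t" "t \<le> pi" and m: "1 \<le> m" "2 * m \<le> n" "1 / real (m+1) \<le> t"
  shows "\<bar>\<Sum>k=0..n. w k * dirichlet k t\<bar> \<le> (3 + 72 * (1 + K)) / t * (\<Sum>k=0..m. w k)"
proof -
  define S where "S = (\<Sum>k=0..m. w k)"
  have block_le: "sum w A \<le> S" if "A \<subseteq> {0..m}" for A
    unfolding S_def using that by (intro sum_mono2) (auto simp: nonneg)
  have "sum w {m - m div 2..m} \<le> S" by (rule block_le) auto
  moreover have "m + 1 \<le> 2 * card {m - m div 2..m}" by simp
  ultimately obtain p where "p \<in> {m - m div 2..m}" and wp: "w p \<le> 2 * t * S"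
    using obtain_small_coefficient m(3) nonneg by blast
  then have p: "1 \<le> p" "p \<le> m" "m \<le> 2 * p" "p < n" using m by auto
  have "(\<Sum>k=p..<n. \<bar>w k - w (Suc k)\<bar>) = (\<Sum>k=p..n-1. \<bar>w k - w (k+1)\<bar>)"
    using p by (intro sum.cong) auto
  also have "\<dots> \<le> K * (1 / real (p+1)) * (\<Sum>k\<in>{k. real p / 2 \<le> real k \<and> k \<le> p}. w k)"
    using p by (intro var) auto
  also have "\<dots> \<le> K * (2 * t) * S"
  proof -
    have "1 / real (p+1) \<le> 2 * (1 / real (m+1))" using p by (simp add: field_simps)
    also have "\<dots> \<le> 2 * t" using m by simp
    finally show ?thesis
      using p t \<open>0 \<le> K\<close> by (intro mult_mono mult_left_mono block_le) (auto simp: sum_nonneg nonneg)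
  qed
  finally have block: "min (w p) (w n) + (\<Sum>k=p..<n. \<bar>w k - w (Suc k)\<bar>) \<le> 2 * (1 + K) * t * S"
    using wp by (simp add: algebra_simps)
  have "\<bar>\<Sum>k=p..n. w k * dirichlet k t\<bar>
      \<le> 36 / t\<^sup>2 * (min (w p) (w n) + (\<Sum>k=p..<n. \<bar>w k - w (Suc k)\<bar>))"
    using nonneg t p by (intro abs_dirichlet_block_le) auto
  also have "\<dots> \<le> 36 / t\<^sup>2 * (2 * (1 + K) * t * S)" using block by (intro mult_left_mono) auto
  also have "\<dots> = 72 * (1 + K) / t * S" using t by (simp add: power2_eq_square field_simps)
  finally have tail: "\<bar>\<Sum>k=p..n. w k * dirichlet k t\<bar> \<le> 72 * (1 + K) / t * S" .
  have head: "\<bar>\<Sum>k=0..<p. w k * dirichlet k t\<bar> \<le> 3 / t * S"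
    using p t by (intro order_trans[OF abs_weighted_dirichlet_le[OF nonneg t]] mult_left_mono block_le) auto
  have split: "{0..n} = {0..<p} \<union> {p..n}" using p by auto
  have "(\<Sum>k=0..n. w k * dirichlet k t)
      = (\<Sum>k=0..<p. w k * dirichlet k t) + (\<Sum>k=p..n. w k * dirichlet k t)"
    unfolding split by (rule sum.union_disjoint) auto
  then show ?thesis using head tail by (simp add: S_def add_divide_distrib distrib_right)
qed


lemma admissible_matrix_nonneg: "admissible_matrix a \<Longrightarrow> 0 \<le> a n k"
  unfolding admissible_matrix_def by (metis le_less_linear order_refl)

lemma MHBVS_dirichlet_bound:
  assumes adm: "admissible_matrix a" and "MHBVS a"
  shows "\<exists>C. \<forall>n t. 2 \<le> n \<and> 2 * pi / real n \<le> t \<and> t \<le> pi \<longrightarrow>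
           \<bar>\<Sum>k=0..n. a n k * dirichlet k t\<bar> \<le> C * (1 / t) * Abar a n (n - 2 * nat \<lfloor>pi / t\<rfloor>)"
proof -
  note nonneg = admissible_matrix_nonneg[OF adm]
  obtain K where K: "\<And>n m. m < n \<Longrightarrow> (\<Sum>k=0..n-m-1. \<bar>a n k - a n (k+1)\<bar>)
                        \<le> K * (1 / real (m+1)) * (\<Sum>k=n-m..n. a n k)"
    using \<open>MHBVS a\<close> unfolding MHBVS_def by blast
  have K': "(\<Sum>k=0..n-m-1. \<bar>a n k - a n (k+1)\<bar>) \<le> max K 0 * (1 / real (m+1)) * (\<Sum>k=n-m..n. a n k)"
    if "m < n" for n m
    by (intro order_trans[OF K[OF that]] mult_right_mono) (auto simp: sum_nonneg nonneg)
  show ?thesis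
  proof (intro exI[of _ "3 + 36 * (2 + max K 0)"] allI impI)
    fix n t
    assume nt: "2 \<le> n \<and> 2 * pi / real n \<le> t \<and> t \<le> pi"
    define \<tau> where "\<tau> = nat \<lfloor>pi / t\<rfloor>"
    have \<tau>: "0 < t" "1 \<le> \<tau>" "2 * \<tau> \<le> n" "1 / real (\<tau> + 1) \<le> t"
      using floor_pi_div_bounds[of n t] nt unfolding \<tau>_def by auto
    have "\<bar>\<Sum>k=0..n. a n k * dirichlet k t\<bar> \<le> (3 + 36 * (2 + max K 0)) / t * (\<Sum>k=n-2*\<tau>..n. a n k)"
      using \<tau> nt by (intro MHBVS_row_bound K' nonneg) auto
    then show "\<bar>\<Sum>k=0..n. a n k * dirichlet k t\<bar>
        \<le> (3 + 36 * (2 + max K 0)) * (1 / t) * Abar a n (n - 2 * nat \<lfloor>pi / t\<rfloor>)"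
      by (simp add: Abar_def \<tau>_def)
  qed
qed

lemma MRBVS_dirichlet_bound:
  assumes adm: "admissible_matrix a" and "MRBVS a"
  shows "\<exists>C. \<forall>n t. 2 \<le> n \<and> 2 * pi / real n \<le> t \<and> t \<le> pi \<longrightarrow>
           \<bar>\<Sum>k=0..n. a n k * dirichlet k t\<bar> \<le> C * (1 / t) * Amat a n (nat \<lfloor>pi / t\<rfloor>)"
proof -
  note nonneg = admissible_matrix_nonneg[OF adm]
  obtain K where K: "\<And>n m. m < n \<Longrightarrow> (\<Sum>k=m..n-1. \<bar>a n k - a n (k+1)\<bar>)
                        \<le> K * (1 / real (m+1)) * (\<Sum>k\<in>{k. real m / 2 \<le> real k \<and> k \<le> m}. a n k)"
    using \<open>MRBVS a\<close> unfolding MRBVS_def by blast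
  have K': "(\<Sum>k=m..n-1. \<bar>a n k - a n (k+1)\<bar>)
      \<le> max K 0 * (1 / real (m+1)) * (\<Sum>k\<in>{k. real m / 2 \<le> real k \<and> k \<le> m}. a n k)"
    if "m < n" for n m
    by (intro order_trans[OF K[OF that]] mult_right_mono) (auto simp: sum_nonneg nonneg)
  show ?thesis
  proof (intro exI[of _ "3 + 72 * (1 + max K 0)"] allI impI)
    fix n t
    assume nt: "2 \<le> n \<and> 2 * pi / real n \<le> t \<and> t \<le> pi"
    define \<tau> where "\<tau> = nat \<lfloor>pi / t\<rfloor>"
    have \<tau>: "0 < t" "1 \<le> \<tau>" "2 * \<tau> \<le> n" "1 / real (\<tau> + 1) \<le> t"
      using floor_pi_div_bounds[of n t] nt unfolding \<tau>_def by auto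
    have "\<bar>\<Sum>k=0..n. a n k * dirichlet k t\<bar> \<le> (3 + 72 * (1 + max K 0)) / t * (\<Sum>k=0..\<tau>. a n k)"
      using \<tau> nt by (intro MRBVS_row_bound K' nonneg) auto
    then show "\<bar>\<Sum>k=0..n. a n k * dirichlet k t\<bar>
        \<le> (3 + 72 * (1 + max K 0)) * (1 / t) * Amat a n (nat \<lfloor>pi / t\<rfloor>)"
      by (simp add: Amat_def \<tau>_def)
  qed
qed

theorem lemma2:
  fixes a :: "nat \<Rightarrow> nat \<Rightarrow> real"
  assumes "admissible_matrix a"
  shows "(MHBVS a \<longrightarrow> (\<exists>C. \<forall>n t. 2 \<le> n \<and> 2 * pi / real n \<le> t \<and> t \<le> pi \<longrightarrow>
            \<bar>\<Sum>k=0..n. a n k * dirichlet k t\<bar>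
              \<le> C * (1 / t) * Abar a n (n - 2 * nat \<lfloor>pi / t\<rfloor>)))
       \<and> (MRBVS a \<longrightarrow> (\<exists>C. \<forall>n t. 2 \<le> n \<and> 2 * pi / real n \<le> t \<and> t \<le> pi \<longrightarrow>
            \<bar>\<Sum>k=0..n. a n k * dirichlet k t\<bar>
              \<le> C * (1 / t) * Amat a n (nat \<lfloor>pi / t\<rfloor>)))"
  using MHBVS_dirichlet_bound[OF assms] MRBVS_dirichlet_bound[OF assms] by blast

end
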